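(* Let $G$ be a subcubic graph (maximum degree at most $3$), and let $D$ be a maximum dissociation set of $G$ which, among all maximum dissociation sets of $G$, maximizes the number of isolated vertices of $G[D]$. Then the graph $G[V(G)\setminus D]$ has maximum degree at most $1$.
   Context: All graphs are finite, simple and undirected. A set $D$ of vertices of $G$ is a dissociation set if the induced subgraph $G[D]$ has maximum degree at most $1$; the dissociation number $\mathrm{diss}(G)$ is the maximum order of a dissociation set, and a maximum dissociation set is one of order $\mathrm{diss}(G)$. *)

theory Defs
  imports Main
begin

definition simple_graph :: "'a set \<Rightarrow> ('a \<Rightarrow> 'a \<Rightarrow> bool) \<Rightarrow> bool" where
  "simple_graph V E \<longleftrightarrow> finite V \<and> (\<forall>u v. E u v \<longrightarrow> u \<in> V \<and> v \<in> V)
     \<and> (\<forall>u v. E u v \<longrightarrow> E v u) \<and> (\<forall>v. \<not> E v v)"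

definition deg_in :: "('a \<Rightarrow> 'a \<Rightarrow> bool) \<Rightarrow> 'a set \<Rightarrow> 'a \<Rightarrow> nat" where
  "deg_in E S v = card {u \<in> S. E v u}"

definition max_deg_le :: "('a \<Rightarrow> 'a \<Rightarrow> bool) \<Rightarrow> 'a set \<Rightarrow> nat \<Rightarrow> bool" where
  "max_deg_le E S k \<longleftrightarrow> (\<forall>v\<in>S. deg_in E S v \<le> k)"

definition subcubic :: "'a set \<Rightarrow> ('a \<Rightarrow> 'a \<Rightarrow> bool) \<Rightarrow> bool" where
  "subcubic V E \<longleftrightarrow> max_deg_le E V 3"

definition dissociation_set :: "'a set \<Rightarrow> ('a \<Rightarrow> 'a \<Rightarrow> bool) \<Rightarrow> 'a set \<Rightarrow> bool" where
  "dissociation_set V E D \<longleftrightarrow> D \<subseteq> V \<and> max_deg_le E D 1"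

definition diss :: "'a set \<Rightarrow> ('a \<Rightarrow> 'a \<Rightarrow> bool) \<Rightarrow> nat" where
  "diss V E = Max {card D | D. dissociation_set V E D}"

definition max_dissociation_set :: "'a set \<Rightarrow> ('a \<Rightarrow> 'a \<Rightarrow> bool) \<Rightarrow> 'a set \<Rightarrow> bool" where
  "max_dissociation_set V E D \<longleftrightarrow> dissociation_set V E D \<and> card D = diss V E"

definition num_isolated :: "('a \<Rightarrow> 'a \<Rightarrow> bool) \<Rightarrow> 'a set \<Rightarrow> nat" where
  "num_isolated E D = card {v \<in> D. deg_in E D v = 0}"

end

theory Submission
  imports Defs
begin

text \<open>Suppose v \<notin> D had two neighbours outside D. Being of degree at most 3, v has at most one
neighbour x in D. If there is no such x, or x is isolated in G[D], then D + v is a larger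
dissociation set. Otherwise x has a neighbour y in D, and D - x + v is again a maximum
dissociation set in which v and every isolated vertex of G[D] are isolated, while x was not:
it has more isolated vertices than D.\<close>

lemma deg_in_le_1_iff:
  assumes "finite S"
  shows "deg_in E S z \<le> 1 \<longleftrightarrow> (\<forall>a\<in>S. \<forall>b\<in>S. E z a \<longrightarrow> E z b \<longrightarrow> a = b)"
  using assms card_le_Suc0_iff_eq[of "{u \<in> S. E z u}"] by (auto simp: deg_in_def)

lemma deg_in_eq_0_iff:
  assumes "finite S"
  shows "deg_in E S z = 0 \<longleftrightarrow> (\<forall>a\<in>S. \<not> E z a)"
  using assms by (auto simp: deg_in_def)

lemma deg_in_Diff:
  assumes "finite V" "D \<subseteq> V"
  shows "deg_in E V v = deg_in E D v + deg_in E (V - D) v"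
proof -
  have "{u \<in> V. E v u} = {u \<in> D. E v u} \<union> {u \<in> V - D. E v u}" using assms(2) by blast
  moreover have "card ({u \<in> D. E v u} \<union> {u \<in> V - D. E v u})
      = card {u \<in> D. E v u} + card {u \<in> V - D. E v u}"
    using assms by (intro card_Un_disjoint) (auto intro: finite_subset)
  ultimately show ?thesis unfolding deg_in_def by simp
qed

lemma dissociation_set_iff:
  assumes "finite V"
  shows "dissociation_set V E S \<longleftrightarrow>
    S \<subseteq> V \<and> (\<forall>z\<in>S. \<forall>a\<in>S. \<forall>b\<in>S. E z a \<longrightarrow> E z b \<longrightarrow> a = b)"
  using assms deg_in_le_1_iff[of S E] finite_subset[of S V]
  by (auto simp: dissociation_set_def max_deg_le_def)

lemma dissociation_set_subset:
  assumes "finite V" "dissociation_set V E D" "S \<subseteq> D"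
  shows "dissociation_set V E S"
  using assms(2,3) unfolding dissociation_set_iff[OF assms(1)] by blast

lemma dissociation_set_finite:
  assumes "simple_graph V E" "dissociation_set V E D"
  shows "finite D"
  using assms finite_subset by (auto simp: simple_graph_def dissociation_set_def)

lemma dissociation_set_insert:
  assumes G: "simple_graph V E" and D: "dissociation_set V E D" and v: "v \<in> V"
    and deg_v: "deg_in E D v \<le> 1"
    and nbr_isolated: "\<And>x. x \<in> D \<Longrightarrow> E v x \<Longrightarrow> deg_in E D x = 0"
  shows "dissociation_set V E (insert v D)"
proof -
  have fin: "finite V" and sym: "\<And>a b. E a b \<Longrightarrow> E b a" and irrefl: "\<And>a. \<not> E a a"
    using G by (auto simp: simple_graph_def)
  have DV: "D \<subseteq> V" using D by (simp add: dissociation_set_def)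
  have finD: "finite D" using dissociation_set_finite[OF G D] .
  have uniq_v: "\<And>a b. a \<in> D \<Longrightarrow> b \<in> D \<Longrightarrow> E v a \<Longrightarrow> E v b \<Longrightarrow> a = b"
    using deg_v deg_in_le_1_iff[OF finD, of E v] by blast
  have lonely: "\<And>x a. x \<in> D \<Longrightarrow> E v x \<Longrightarrow> a \<in> D \<Longrightarrow> \<not> E x a"
    using nbr_isolated deg_in_eq_0_iff[OF finD] by blast
  have uniq_D: "\<And>z a b. z \<in> D \<Longrightarrow> a \<in> D \<Longrightarrow> b \<in> D \<Longrightarrow> E z a \<Longrightarrow> E z b \<Longrightarrow> a = b"
    using D by (auto simp: dissociation_set_iff[OF fin])
  show ?thesis
    unfolding dissociation_set_iff[OF fin]
    using DV v uniq_v uniq_D irrefl by (metis insert_iff insert_subset lonely sym)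
qed

lemma dissociation_set_exchange:
  assumes G: "simple_graph V E" and D: "dissociation_set V E D" and v: "v \<in> V"
    and only_x: "\<And>a. a \<in> D \<Longrightarrow> E v a \<Longrightarrow> a = x"
  shows "dissociation_set V E (insert v (D - {x}))"
proof (rule dissociation_set_insert[OF G _ v])
  show "dissociation_set V E (D - {x})"
    using G by (intro dissociation_set_subset[OF _ D]) (auto simp: simple_graph_def)
  have "{a \<in> D - {x}. E v a} = {}" using only_x by blast
  then show "deg_in E (D - {x}) v \<le> 1" by (simp only: deg_in_def card.empty)
next
  fix a assume "a \<in> D - {x}" "E v a"
  then show "deg_in E (D - {x}) a = 0" using only_x by (metis DiffE singletonI)
qed

lemma card_le_diss:
  assumes "simple_graph V E" "dissociation_set V E D"
  shows "card D \<le> diss V E"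
proof -
  have "{card D | D. dissociation_set V E D} \<subseteq> card ` Pow V"
    by (auto simp: dissociation_set_def)
  moreover have "finite (card ` Pow V)" using assms(1) by (simp add: simple_graph_def)
  ultimately have "finite {card D | D. dissociation_set V E D}" by (rule finite_subset)
  then show ?thesis unfolding diss_def using assms(2) by (auto intro!: Max_ge)
qed

lemma max_dissociation_set_insert:
  assumes "simple_graph V E" "max_dissociation_set V E D" "v \<in> V - D"
  shows "\<not> dissociation_set V E (insert v D)"
proof
  assume "dissociation_set V E (insert v D)"
  then have "card (insert v D) \<le> card D"
    using assms card_le_diss by (fastforce simp: max_dissociation_set_def)
  moreover have "finite D"
    using assms(1,2) dissociation_set_finite by (auto simp: max_dissociation_set_def)
  ultimately show False using assms(3) by simp
qed

lemma max_dissociation_set_exchange: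
  assumes "simple_graph V E" "max_dissociation_set V E D" "v \<in> V - D" "x \<in> D"
    and "dissociation_set V E (insert v (D - {x}))"
  shows "max_dissociation_set V E (insert v (D - {x}))"
proof -
  have "finite D"
    using assms(1,2) dissociation_set_finite by (auto simp: max_dissociation_set_def)
  moreover have "card D > 0" using \<open>finite D\<close> assms(4) card_gt_0_iff by blast
  ultimately have "card (insert v (D - {x})) = card D"
    using assms(3,4) by (simp add: card_Diff_singleton)
  then show ?thesis using assms(2,5) by (simp add: max_dissociation_set_def)
qed

lemma num_isolated_exchange:
  assumes sym: "\<And>a b. E a b \<Longrightarrow> E b a" and irrefl: "\<And>a. \<not> E a a"
    and finD: "finite D" and v: "v \<notin> D" and x: "x \<in> D" "deg_in E D x \<noteq> 0"
    and only_x: "\<And>a. a \<in> D \<Longrightarrow> E v a \<Longrightarrow> a = x"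
  shows "num_isolated E D < num_isolated E (insert v (D - {x}))"
proof -
  let ?D' = "insert v (D - {x})"
  have finD': "finite ?D'" using finD by simp
  have "deg_in E ?D' z = 0" if z: "z = v \<or> z \<in> D \<and> deg_in E D z = 0" for z
  proof -
    have "\<not> E z a" if "a \<in> ?D'" for a
      using z that irrefl only_x sym x deg_in_eq_0_iff[OF finD] by (metis DiffE insertE singletonI)
    then show ?thesis using deg_in_eq_0_iff[OF finD'] by blast
  qed
  then have "insert v {z \<in> D. deg_in E D z = 0} \<subseteq> {z \<in> ?D'. deg_in E ?D' z = 0}"
    using x(2) by auto
  then have "card (insert v {z \<in> D. deg_in E D z = 0}) \<le> card {z \<in> ?D'. deg_in E ?D' z = 0}"
    using finD' by (intro card_mono) auto
  then show ?thesis using finD v by (simp add: num_isolated_def)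
qed

theorem mainTheorem4:
  fixes V :: "'a set" and E :: "'a \<Rightarrow> 'a \<Rightarrow> bool" and D :: "'a set"
  assumes "simple_graph V E"
    and "subcubic V E"
    and "max_dissociation_set V E D"
    and "\<forall>D'. max_dissociation_set V E D' \<longrightarrow> num_isolated E D' \<le> num_isolated E D"
  shows "max_deg_le E (V - D) 1"
  unfolding max_deg_le_def
proof (rule ballI, rule ccontr)
  fix v assume v: "v \<in> V - D" and "\<not> deg_in E (V - D) v \<le> 1"
  have fin: "finite V" and sym: "\<And>a b. E a b \<Longrightarrow> E b a" and irrefl: "\<And>a. \<not> E a a"
    using assms(1) by (auto simp: simple_graph_def)
  have D: "dissociation_set V E D" and DV: "D \<subseteq> V"
    using assms(3) by (auto simp: max_dissociation_set_def dissociation_set_def)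
  have finD: "finite D" using dissociation_set_finite[OF assms(1) D] .
  have "deg_in E V v \<le> 3" using assms(2) v by (auto simp: subcubic_def max_deg_le_def)
  then have deg_v: "deg_in E D v \<le> 1"
    using \<open>\<not> deg_in E (V - D) v \<le> 1\<close> deg_in_Diff[OF fin DV] by simp
  show False
  proof (cases "\<exists>x\<in>D. E v x \<and> deg_in E D x \<noteq> 0")
    case True
    then obtain x where x: "x \<in> D" "E v x" "deg_in E D x \<noteq> 0" by blast
    have only_x: "\<And>a. a \<in> D \<Longrightarrow> E v a \<Longrightarrow> a = x"
      using deg_v x deg_in_le_1_iff[OF finD, of E v] by blast
    have "dissociation_set V E (insert v (D - {x}))"
      using v by (intro dissociation_set_exchange[OF assms(1) D _ only_x]) auto
    then have "max_dissociation_set V E (insert v (D - {x}))"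
      by (rule max_dissociation_set_exchange[OF assms(1,3) v x(1)])
    moreover have "num_isolated E D < num_isolated E (insert v (D - {x}))"
      using v by (intro num_isolated_exchange[OF sym irrefl finD _ x(1,3) only_x]) auto
    ultimately show False using assms(4) by (simp add: not_le[symmetric])
  next
    case False
    then have "dissociation_set V E (insert v D)"
      using v by (intro dissociation_set_insert[OF assms(1) D _ deg_v]) auto
    then show False using max_dissociation_set_insert[OF assms(1,3) v] by contradiction
  qed
qed

end
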